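(* Let $4<p\le\infty$ (with the convention $\frac1p=0$ if $p=\infty$), $T>0$, and let $\phi\in L^\infty([0,T])$, $\phi\ge0$, satisfy $$\phi(t)\le c_0(t)+\int_0^t\Big(\frac{1}{(t-s)^{\frac1p+\frac12}}+1\Big)c_1(s)\phi(s)\,ds\quad\text{for a.e. }t\in[0,T],$$ where $c_1\in L^p([0,T])$ is nonnegative and $c_0\in L^\infty([0,T])$ is nonnegative and non-decreasing. Then $$\phi(t)\le c_0(t)\,M_p\big(\|c_1\|_{L^p(0,t)},t\big)\quad\text{for a.e. }t\in[0,T],$$ where $M_p:(\mathbb{R}_+)^2\to[1,\infty)$ is a positive, non-decreasing, continuous function depending only on $p$, of at most exponential-polynomial growth (i.e. bounded by the exponential of a polynomial). *)

theory Defs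
  imports "HOL-Analysis.Analysis"
begin

definition exp_inv :: "ereal \<Rightarrow> real" where
  "exp_inv p = (if p = \<infinity> then 0 else 1 / real_of_ereal p)"

definition in_Lp :: "ereal \<Rightarrow> real set \<Rightarrow> (real \<Rightarrow> real) \<Rightarrow> bool" where
  "in_Lp p A f \<longleftrightarrow> f \<in> borel_measurable (lebesgue_on A) \<and>
     (if p = \<infinity> then (\<exists>C. AE s in lebesgue_on A. \<bar>f s\<bar> \<le> C)
      else integrable (lebesgue_on A) (\<lambda>s. \<bar>f s\<bar> powr real_of_ereal p))"

definition Lp_norm_on :: "ereal \<Rightarrow> real set \<Rightarrow> (real \<Rightarrow> real) \<Rightarrow> real" where
  "Lp_norm_on p A f =
     (if p = \<infinity> then Inf {C. 0 \<le> C \<and> (AE s in lebesgue_on A. \<bar>f s\<bar> \<le> C)}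
      else (integral\<^sup>L (lebesgue_on A) (\<lambda>s. \<bar>f s\<bar> powr real_of_ereal p))
             powr (1 / real_of_ereal p))"

end

theory Submission
  imports Defs
begin

text \<open>
  Let \<open>a = 1/p + 1/2\<close>, let \<open>r\<close> be a finite exponent with \<open>c\<^sub>1 \<in> L\<^sup>r\<close> and \<open>q\<close> its conjugate.
  The condition \<open>p > 4\<close> is exactly \<open>a q < 1\<close>, i.e. the kernel \<open>(t - s)\<^sup>-\<^sup>a\<close> lies in \<open>L\<^sup>q\<close>.
  Young's inequality, combined with \<open>exp (-y) \<le> y\<^sup>-\<^sup>\<gamma>\<close> for a small \<open>\<gamma> > 0\<close>, shows that for a
  rate \<open>L\<close> which is polynomial in \<open>t\<close> and in the \<open>L\<^sup>p\<close> norm of \<open>c\<^sub>1\<close> on \<open>[0, t]\<close>, the integral of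
  \<open>((t - s)\<^sup>-\<^sup>a + 1) c\<^sub>1(s) exp (L s)\<close> over \<open>[0, t]\<close> is at most \<open>exp (L t) / 2\<close>.
  Hence on \<open>[0, t\<^sub>0]\<close> every bound \<open>\<phi>(s) \<le> b exp (L s)\<close> improves to \<open>(c\<^sub>0(t\<^sub>0) + b/2) exp (L s)\<close>;
  iterating from the \<open>L\<^sup>\<infinity>\<close> bound gives \<open>\<phi>(s) \<le> 2 c\<^sub>0(t\<^sub>0) exp (L s)\<close>, and inserting this once
  more into the inequality gives \<open>\<phi>(t\<^sub>0) \<le> c\<^sub>0(t\<^sub>0) (1 + exp (L t\<^sub>0))\<close>, a bound of
  exponential-polynomial size.
\<close>

lemma AE_lebesgue_on_subset:
  assumes "AE x in lebesgue_on A. P x" "B \<subseteq> A" "A \<in> sets lebesgue" "B \<in> sets lebesgue"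
  shows "AE x in lebesgue_on B. P x"
proof -
  have "AE x in lebesgue. x \<in> A \<longrightarrow> P x" using assms by (simp add: AE_restrict_space_iff)
  then have "AE x in lebesgue. x \<in> B \<longrightarrow> P x" by eventually_elim (use assms(2) in auto)
  then show ?thesis using assms by (simp add: AE_restrict_space_iff)
qed

lemma AE_lebesgue_on_mem_neq:
  assumes "S \<in> sets lebesgue"
  shows "AE u in lebesgue_on S. u \<in> S \<and> u \<noteq> (t::real)"
proof -
  have "AE u in lebesgue. u \<noteq> t" by (rule AE_completion[OF AE_lborel_singleton])
  then have "AE u in lebesgue. u \<in> S \<longrightarrow> u \<noteq> t" by eventually_elim auto
  then show ?thesis using assms by (simp add: AE_restrict_space_iff)
qed

lemma AE_le_of_tendsto:
  fixes f :: "'a \<Rightarrow> real"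
  assumes "\<And>n. AE x in M. f x \<le> g n x" and "\<And>x. (\<lambda>n. g n x) \<longlonglongrightarrow> h x"
  shows "AE x in M. f x \<le> h x"
proof -
  have "AE x in M. \<forall>n. f x \<le> g n x" using assms(1) by (simp add: AE_all_countable)
  then show ?thesis
  proof eventually_elim
    case (elim x)
    show ?case by (rule LIMSEQ_le_const[OF assms(2)]) (use elim in auto)
  qed
qed

lemma borel_measurable_lebesgue_on_of_borel:
  "(f :: real \<Rightarrow> real) \<in> borel_measurable borel \<Longrightarrow> f \<in> borel_measurable (lebesgue_on S)"
  by (intro measurable_restrict_space1 measurable_completion) simp

lemma lebesgue_on_has_integral_nonneg:
  fixes f :: "real \<Rightarrow> real"
  assumes "(f has_integral I) S" "\<And>x. x \<in> S \<Longrightarrow> 0 \<le> f x" "S \<in> sets lebesgue"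
  shows "integrable (lebesgue_on S) f" "integral\<^sup>L (lebesgue_on S) f = I"
proof -
  have "f absolutely_integrable_on S"
    using assms nonnegative_absolutely_integrable_1 by blast
  then show i: "integrable (lebesgue_on S) f"
    using assms(3) by (simp add: integrable_restrict_space set_integrable_def)
  show "integral\<^sup>L (lebesgue_on S) f = I"
    using lebesgue_integral_eq_integral[OF i assms(3)] assms(1) by (simp add: integral_unique)
qed

lemma powr_diff_has_integral:
  fixes t \<rho> :: real
  assumes "0 \<le> t" "\<rho> < 1"
  shows "((\<lambda>u. (t - u) powr (-\<rho>)) has_integral t powr (1 - \<rho>) / (1 - \<rho>)) {0..t}"
proof -
  define F where "F u = - ((t - u) powr (1 - \<rho>) / (1 - \<rho>))" for u
  have "((\<lambda>u. (t - u) powr (-\<rho>)) has_integral (F t - F 0)) {0..t}"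
  proof (rule fundamental_theorem_of_calculus_interior[OF assms(1)])
    show "continuous_on {0..t} F" unfolding F_def using assms
      by (intro continuous_intros continuous_on_powr') (auto intro!: continuous_intros)
    fix x assume x: "x \<in> {0<..<t}"
    have "(F has_real_derivative (t - x) powr (-\<rho>)) (at x)"
      unfolding F_def using assms x by (auto intro!: derivative_eq_intros)
    then show "(F has_vector_derivative (t - x) powr (-\<rho>)) (at x)"
      by (simp add: has_real_derivative_iff_has_vector_derivative)
  qed
  moreover have "F t - F 0 = t powr (1 - \<rho>) / (1 - \<rho>)" unfolding F_def using assms by simp
  ultimately show ?thesis by simp
qed

lemma powr_le_one_plus:
  fixes t e :: real
  assumes "0 \<le> t" "0 \<le> e" "e \<le> 1"
  shows "t powr e \<le> 1 + t"
proof (cases "t \<le> 1")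
  case True
  then have "t powr e \<le> 1" using assms by (intro powr_le1) auto
  then show ?thesis using assms by simp
next
  case False
  then have "t powr e \<le> t powr 1" using assms by (intro powr_mono) auto
  then show ?thesis using False by simp
qed

lemma exp_neg_le_powr:
  fixes y e :: real
  assumes "0 < y" "0 \<le> e" "e \<le> 1"
  shows "exp (-y) \<le> y powr (-e)"
proof -
  have "y powr e \<le> exp y"
    using powr_le_one_plus[of y e] exp_ge_add_one_self[of y] assms by linarith
  then have "1 / exp y \<le> 1 / y powr e" using assms by (intro divide_left_mono) auto
  then show ?thesis using assms by (simp add: exp_minus powr_minus field_simps)
qed

lemma one_plus_exp_le_exp_one_plus:
  fixes y :: real
  assumes "0 \<le> y"
  shows "1 + exp y \<le> exp (1 + y)"
proof -
  have "1 + exp y \<le> 2 * exp y" using assms by simp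
  also have "\<dots> \<le> exp 1 * exp y" using exp_ge_add_one_self[of 1] by (intro mult_right_mono) auto
  finally show ?thesis by (simp add: exp_add)
qed

text \<open>Young's inequality with weight \<open>\<epsilon>\<close>, then \<open>exp (-y) \<le> y\<^sup>-\<^sup>\<gamma>\<close> for \<open>y = L q v\<close>.\<close>

lemma young_exp_weight:
  fixes r q e \<gamma> L \<epsilon> x v :: real
  assumes r: "1 < r" and q: "q = r / (r - 1)" and e: "0 \<le> e" and \<gamma>: "0 \<le> \<gamma>" "\<gamma> \<le> 1"
    and L: "0 < L" and \<epsilon>: "0 < \<epsilon>" and x: "0 \<le> x" and v: "0 < v"
  shows "v powr (-e) * exp (- L * v) * x
    \<le> \<epsilon> powr r * x powr r / r + (L * q) powr (-\<gamma>) * v powr (- (e * q + \<gamma>)) / (q * \<epsilon> powr q)"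
proof -
  have q1: "1 < q" using r unfolding q by (simp add: less_divide_eq)
  have conj: "1 / r + 1 / q = 1" using r unfolding q by (simp add: field_simps)
  define A where "A = \<epsilon> * x"
  define B where "B = v powr (-e) * exp (- L * v) / \<epsilon>"
  have "A * B \<le> A powr r / r + B powr q / q"
    by (rule Youngs_inequality) (use r q1 conj \<epsilon> x in \<open>auto simp: A_def B_def\<close>)
  moreover have "v powr (-e) * exp (- L * v) * x = A * B" unfolding A_def B_def using \<epsilon> by simp
  moreover have "A powr r / r = \<epsilon> powr r * x powr r / r" unfolding A_def using \<epsilon> x by (simp add: powr_mult)
  moreover have "B powr q \<le> (L * q) powr (-\<gamma>) * v powr (- (e * q + \<gamma>)) / \<epsilon> powr q"
  proof -
    have "B powr q = (v powr (-e)) powr q * (exp (- L * v)) powr q / \<epsilon> powr q"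
      unfolding B_def using \<epsilon> v by (simp add: powr_mult powr_divide)
    also have "\<dots> = v powr (- (e * q)) * exp (- (L * q * v)) / \<epsilon> powr q"
      using powr_powr[of v "-e" q] powr_def[of "exp (- L * v)" q] by (simp add: mult_ac)
    also have "\<dots> \<le> v powr (- (e * q)) * (L * q * v) powr (-\<gamma>) / \<epsilon> powr q"
      using exp_neg_le_powr[of "L * q * v" \<gamma>] L v q1 \<gamma> \<epsilon>
      by (intro divide_right_mono mult_left_mono) auto
    also have "\<dots> = (L * q) powr (-\<gamma>) * v powr (- (e * q + \<gamma>)) / \<epsilon> powr q"
      using L q1 v by (simp add: powr_mult powr_add[symmetric] algebra_simps)
    finally show ?thesis .
  qed
  then have "B powr q / q \<le> (L * q) powr (-\<gamma>) * v powr (- (e * q + \<gamma>)) / (q * \<epsilon> powr q)"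
    using q1 by (simp add: divide_right_mono field_simps)
  ultimately show ?thesis by linarith
qed

section \<open>Gronwall's argument with an exponential weight\<close>

lemma integral_kernel_le_of_weighted_bound:
  fixes K \<phi> :: "real \<Rightarrow> real"
  assumes K: "integrable (lebesgue_on S) (\<lambda>u. K u * exp (L * u))" "AE u in lebesgue_on S. 0 \<le> K u"
    and \<phi>: "AE u in lebesgue_on S. 0 \<le> \<phi> u \<and> \<phi> u \<le> b * exp (L * u)"
  shows "(LINT u|lebesgue_on S. K u * \<phi> u) \<le> b * (LINT u|lebesgue_on S. K u * exp (L * u))"
proof -
  have "(LINT u|lebesgue_on S. K u * \<phi> u) \<le> (LINT u|lebesgue_on S. b * (K u * exp (L * u)))"
  proof (rule integral_mono_AE')
    show "integrable (lebesgue_on S) (\<lambda>u. b * (K u * exp (L * u)))" using K(1) by simp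
    show "AE u in lebesgue_on S. K u * \<phi> u \<le> b * (K u * exp (L * u))"
      using K(2) \<phi>
    proof eventually_elim
      case (elim u)
      then have "K u * \<phi> u \<le> K u * (b * exp (L * u))" by (intro mult_left_mono) auto
      then show ?case by (simp add: mult_ac)
    qed
    show "AE u in lebesgue_on S. 0 \<le> b * (K u * exp (L * u))"
      using K(2) \<phi>
    proof eventually_elim
      case (elim u)
      then have "0 \<le> b * exp (L * u)" by linarith
      then have "0 \<le> b" using exp_gt_zero[of "L * u"] by (simp add: zero_le_mult_iff)
      then have "0 \<le> K u * (b * exp (L * u))" using elim by simp
      then show ?case by (metis mult.left_commute)
    qed
  qed
  then show ?thesis by simp
qed

lemma AE_le_fixpoint_of_halving:
  fixes \<phi> w :: "'a \<Rightarrow> real"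
  assumes "0 \<le> c" "0 \<le> \<Phi>"
    and start: "AE x in M. \<phi> x \<le> (2 * c + \<Phi>) * w x"
    and improve: "\<And>b. 0 \<le> b \<Longrightarrow> AE x in M. \<phi> x \<le> b * w x \<Longrightarrow> AE x in M. \<phi> x \<le> (c + b / 2) * w x"
  shows "AE x in M. \<phi> x \<le> 2 * c * w x"
proof -
  have "AE x in M. \<phi> x \<le> (2 * c + \<Phi> * (1/2) ^ n) * w x" for n
  proof (induction n)
    case 0
    show ?case using start by simp
  next
    case (Suc n)
    have "0 \<le> 2 * c + \<Phi> * (1/2) ^ n" using assms(1,2) by simp
    moreover have "c + (2 * c + \<Phi> * (1/2) ^ n) / 2 = 2 * c + \<Phi> * (1/2) ^ Suc n" by simp
    ultimately show ?case using improve Suc by metis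
  qed
  then show ?thesis
  proof (rule AE_le_of_tendsto)
    fix x
    have "(\<lambda>n. (2 * c + \<Phi> * (1/2) ^ n) * w x) \<longlonglongrightarrow> (2 * c + \<Phi> * 0) * w x"
      by (intro tendsto_intros LIMSEQ_realpow_zero) auto
    then show "(\<lambda>n. (2 * c + \<Phi> * (1/2) ^ n) * w x) \<longlonglongrightarrow> 2 * c * w x" by simp
  qed
qed

lemma gronwall_exponential_weight:
  fixes K :: "real \<Rightarrow> real \<Rightarrow> real" and \<phi> c0 :: "real \<Rightarrow> real"
  assumes "0 < L" "0 \<le> t0"
    and weighted: "\<And>t. t \<in> {0..t0} \<Longrightarrow> integrable (lebesgue_on {0..t}) (\<lambda>u. K t u * exp (L * u))"
      "\<And>t. t \<in> {0..t0} \<Longrightarrow> (LINT u|lebesgue_on {0..t}. K t u * exp (L * u)) \<le> exp (L * t) / 2"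
    and K_nonneg: "\<And>t. t \<in> {0..t0} \<Longrightarrow> AE u in lebesgue_on {0..t}. 0 \<le> K t u"
    and \<phi>_bounded: "AE s in lebesgue_on {0..t0}. \<bar>\<phi> s\<bar> \<le> \<Phi>"
    and \<phi>_nonneg: "AE s in lebesgue_on {0..t0}. 0 \<le> \<phi> s"
    and c0: "\<And>s. s \<in> {0..t0} \<Longrightarrow> c0 s \<le> c0 t0" "0 \<le> c0 t0"
    and ineq: "AE t in lebesgue_on {0..t0}. \<phi> t \<le> c0 t + (LINT s|lebesgue_on {0..t}. K t s * \<phi> s)"
    and ineq_t0: "\<phi> t0 \<le> c0 t0 + (LINT s|lebesgue_on {0..t0}. K t0 s * \<phi> s)"
  shows "\<phi> t0 \<le> c0 t0 * (1 + exp (L * t0))"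
proof -
  define c where "c = c0 t0"
  have kernel_le: "(LINT u|lebesgue_on {0..s}. K s u * \<phi> u) \<le> b * exp (L * s) / 2"
    if s: "s \<in> {0..t0}" and "0 \<le> b" and bound: "AE u in lebesgue_on {0..t0}. \<phi> u \<le> b * exp (L * u)"
    for s b
  proof -
    have "AE u in lebesgue_on {0..t0}. 0 \<le> \<phi> u \<and> \<phi> u \<le> b * exp (L * u)"
      using \<phi>_nonneg bound by eventually_elim simp
    then have "AE u in lebesgue_on {0..s}. 0 \<le> \<phi> u \<and> \<phi> u \<le> b * exp (L * u)"
      by (rule AE_lebesgue_on_subset) (use s in auto)
    then have "(LINT u|lebesgue_on {0..s}. K s u * \<phi> u)
        \<le> b * (LINT u|lebesgue_on {0..s}. K s u * exp (L * u))"
      using weighted(1)[OF s] K_nonneg[OF s] by (intro integral_kernel_le_of_weighted_bound)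
    also have "\<dots> \<le> b * (exp (L * s) / 2)" using weighted(2)[OF s] \<open>0 \<le> b\<close> by (intro mult_left_mono)
    finally show ?thesis by simp
  qed
  have in_interval: "AE s in lebesgue_on {0..t0}. s \<in> {0..t0} \<and> s \<noteq> 0"
    by (rule AE_lebesgue_on_mem_neq) simp
  have c_le: "c \<le> c * exp (L * s)" if "s \<in> {0..t0}" for s
    using mult_left_mono[of 1 "exp (L * s)" c] c0(2) \<open>0 < L\<close> that unfolding c_def by simp
  have "AE s in lebesgue_on {0..t0}. \<phi> s \<le> 2 * c * exp (L * s)"
  proof (rule AE_le_fixpoint_of_halving[of c "max \<Phi> 0"])
    show "0 \<le> c" "0 \<le> max \<Phi> 0" using c0(2) unfolding c_def by auto
    show "AE s in lebesgue_on {0..t0}. \<phi> s \<le> (2 * c + max \<Phi> 0) * exp (L * s)"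
      using \<phi>_bounded in_interval
    proof eventually_elim
      case (elim s)
      then have "\<phi> s \<le> c + (c + max \<Phi> 0) * 1" using c0(2) unfolding c_def by auto
      also have "\<dots> \<le> c * exp (L * s) + (c + max \<Phi> 0) * exp (L * s)"
        using elim c_le \<open>0 < L\<close> c0(2) unfolding c_def by (intro add_mono mult_left_mono) auto
      finally show ?case by (simp add: algebra_simps)
    qed
    fix b
    assume "0 \<le> b" and bound: "AE s in lebesgue_on {0..t0}. \<phi> s \<le> b * exp (L * s)"
    show "AE s in lebesgue_on {0..t0}. \<phi> s \<le> (c + b / 2) * exp (L * s)"
      using ineq in_interval
    proof eventually_elim
      case (elim s)
      then have "s \<in> {0..t0}" by auto
      then have "c0 s \<le> c * exp (L * s)" using c_le c0(1) unfolding c_def by fastforce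
      then show ?case using elim kernel_le[OF \<open>s \<in> {0..t0}\<close> \<open>0 \<le> b\<close> bound]
        by (simp add: algebra_simps)
    qed
  qed
  then have "(LINT u|lebesgue_on {0..t0}. K t0 u * \<phi> u) \<le> 2 * c * exp (L * t0) / 2"
    using kernel_le[of t0 "2 * c"] \<open>0 \<le> t0\<close> c0(2) unfolding c_def by simp
  then show ?thesis using ineq_t0 unfolding c_def by (simp add: algebra_simps)
qed

section \<open>The singular kernel\<close>

locale singular_gronwall_exponents =
  fixes r a :: real
  assumes r_gt_1: "1 < r" and a_nonneg: "0 \<le> a" and a_lt: "a < 1 - 1 / r"
begin

definition q :: real where "q = r / (r - 1)"

text \<open>
  Half of the room left in \<open>a q < 1\<close>: one \<open>\<gamma>\<close> is spent on \<open>exp (-y) \<le> y\<^sup>-\<^sup>\<gamma>\<close>, and the kernel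
  \<open>(t - s) powr (- (a q + \<gamma>))\<close> still stays integrable.
\<close>

definition \<gamma> :: real where "\<gamma> = (1 - a * q) / 2"

lemma q_gt_1: "1 < q"
  using r_gt_1 unfolding q_def by (simp add: less_divide_eq)

lemma a_q_lt_1: "a * q < 1"
proof -
  have "a * r < r - 1" using a_lt r_gt_1 by (simp add: field_simps)
  then show ?thesis unfolding q_def using r_gt_1 by (simp add: field_simps)
qed

lemma a_q_nonneg: "0 \<le> a * q"
  using a_nonneg q_gt_1 by simp

lemma \<gamma>_pos: "0 < \<gamma>" and \<gamma>_le_half: "\<gamma> \<le> 1/2"
  using a_q_lt_1 a_q_nonneg unfolding \<gamma>_def by auto

lemma kernel_exp_le_young:
  assumes "0 < L" "0 < \<epsilon>" "0 < v" "0 \<le> x"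
  shows "(1 / v powr a + 1) * x * exp (- L * v)
    \<le> 2 * (\<epsilon> powr r / r) * x powr r
       + (L * q) powr (-\<gamma>) / (q * \<epsilon> powr q) * (v powr (- (a * q + \<gamma>)) + v powr (-\<gamma>))"
proof -
  have young: "v powr (-e) * exp (- L * v) * x
      \<le> \<epsilon> powr r * x powr r / r + (L * q) powr (-\<gamma>) * v powr (- (e * q + \<gamma>)) / (q * \<epsilon> powr q)"
    if "0 \<le> e" for e
    by (rule young_exp_weight) (use assms that r_gt_1 \<gamma>_pos \<gamma>_le_half in \<open>auto simp: q_def\<close>)
  have "(1 / v powr a + 1) * x * exp (- L * v)
      = v powr (-a) * exp (- L * v) * x + v powr (-0) * exp (- L * v) * x"
    using assms by (simp add: powr_minus_divide algebra_simps)
  also have "\<dots> \<le> 2 * (\<epsilon> powr r * x powr r / r)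
      + ((L * q) powr (-\<gamma>) * v powr (- (a * q + \<gamma>)) / (q * \<epsilon> powr q)
         + (L * q) powr (-\<gamma>) * v powr (- (0 * q + \<gamma>)) / (q * \<epsilon> powr q))"
    using young[OF a_nonneg] young[of 0] by simp
  also have "\<dots> = 2 * (\<epsilon> powr r / r) * x powr r
      + (L * q) powr (-\<gamma>) / (q * \<epsilon> powr q) * (v powr (- (a * q + \<gamma>)) + v powr (-\<gamma>))"
    by (simp add: algebra_simps add_divide_distrib)
  finally show ?thesis .
qed

lemma young_majorant_integral_le:
  fixes c1 :: "real \<Rightarrow> real"
  assumes "0 \<le> t" "0 \<le> A" "0 \<le> D"
    and c1: "integrable (lebesgue_on {0..t}) (\<lambda>u. \<bar>c1 u\<bar> powr r)"
      "(LINT u|lebesgue_on {0..t}. \<bar>c1 u\<bar> powr r) \<le> P"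
    and small: "A * P \<le> 1/8" "D * (1 + t) / \<gamma> \<le> 1/8"
  shows "integrable (lebesgue_on {0..t})
      (\<lambda>u. 2 * A * \<bar>c1 u\<bar> powr r + D * ((t - u) powr (- (a * q + \<gamma>)) + (t - u) powr (-\<gamma>)))"
    and "(LINT u|lebesgue_on {0..t}.
      2 * A * \<bar>c1 u\<bar> powr r + D * ((t - u) powr (- (a * q + \<gamma>)) + (t - u) powr (-\<gamma>))) \<le> 1/2"
proof -
  have kernel: "integrable (lebesgue_on {0..t}) (\<lambda>u. (t - u) powr (-\<rho>))"
    "(LINT u|lebesgue_on {0..t}. (t - u) powr (-\<rho>)) = t powr (1 - \<rho>) / (1 - \<rho>)" if "\<rho> < 1" for \<rho>
    using lebesgue_on_has_integral_nonneg[OF powr_diff_has_integral[OF \<open>0 \<le> t\<close> that]] by auto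
  have exps: "a * q + \<gamma> < 1" "\<gamma> < 1" "1 - (a * q + \<gamma>) = \<gamma>"
    using a_q_lt_1 a_q_nonneg unfolding \<gamma>_def by (simp_all add: field_simps)
  show "integrable (lebesgue_on {0..t})
      (\<lambda>u. 2 * A * \<bar>c1 u\<bar> powr r + D * ((t - u) powr (- (a * q + \<gamma>)) + (t - u) powr (-\<gamma>)))"
    using c1(1) kernel(1)[OF exps(1)] kernel(1)[OF exps(2)] by simp
  have "(LINT u|lebesgue_on {0..t}.
      2 * A * \<bar>c1 u\<bar> powr r + D * ((t - u) powr (- (a * q + \<gamma>)) + (t - u) powr (-\<gamma>)))
      = 2 * A * (LINT u|lebesgue_on {0..t}. \<bar>c1 u\<bar> powr r)
        + D * (t powr \<gamma> / \<gamma> + t powr (1 - \<gamma>) / (1 - \<gamma>))"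
    using c1(1) kernel[OF exps(1)] kernel[OF exps(2)] exps(3) by simp
  also have "\<dots> \<le> 2 * A * P + D * (2 * (1 + t) / \<gamma>)"
  proof (intro add_mono mult_left_mono)
    have "t powr \<gamma> / \<gamma> \<le> (1 + t) / \<gamma>"
      using powr_le_one_plus[of t \<gamma>] \<open>0 \<le> t\<close> \<gamma>_pos \<gamma>_le_half by (intro divide_right_mono) auto
    moreover have "t powr (1 - \<gamma>) / (1 - \<gamma>) \<le> (1 + t) / \<gamma>"
      using powr_le_one_plus[of t "1 - \<gamma>"] \<open>0 \<le> t\<close> \<gamma>_pos \<gamma>_le_half
      by (intro frac_le) auto
    ultimately have "t powr \<gamma> / \<gamma> + t powr (1 - \<gamma>) / (1 - \<gamma>) \<le> (1 + t) / \<gamma> + (1 + t) / \<gamma>"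
      by (rule add_mono)
    then show "t powr \<gamma> / \<gamma> + t powr (1 - \<gamma>) / (1 - \<gamma>) \<le> 2 * (1 + t) / \<gamma>"
      by (simp add: add_divide_distrib)
  qed (use c1(2) \<open>0 \<le> A\<close> \<open>0 \<le> D\<close> in auto)
  also have "\<dots> \<le> 1/2"
  proof -
    have "D * (2 * (1 + t) / \<gamma>) = 2 * (D * (1 + t) / \<gamma>)" by simp
    then show ?thesis using small by linarith
  qed
  finally show "(LINT u|lebesgue_on {0..t}.
      2 * A * \<bar>c1 u\<bar> powr r + D * ((t - u) powr (- (a * q + \<gamma>)) + (t - u) powr (-\<gamma>))) \<le> 1/2" .
qed

lemma weighted_kernel_integral_le:
  fixes c1 :: "real \<Rightarrow> real"
  assumes "0 < L" "0 < \<epsilon>" "0 \<le> t"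
    and c1: "c1 \<in> borel_measurable (lebesgue_on {0..t})" "AE u in lebesgue_on {0..t}. 0 \<le> c1 u"
      "integrable (lebesgue_on {0..t}) (\<lambda>u. \<bar>c1 u\<bar> powr r)"
      "(LINT u|lebesgue_on {0..t}. \<bar>c1 u\<bar> powr r) \<le> P"
    and small: "\<epsilon> powr r / r * P \<le> 1/8" "(L * q) powr (-\<gamma>) / (q * \<epsilon> powr q) * (1 + t) / \<gamma> \<le> 1/8"
  shows "integrable (lebesgue_on {0..t}) (\<lambda>u. (1 / (t - u) powr a + 1) * c1 u * exp (L * u))"
    and "(LINT u|lebesgue_on {0..t}. (1 / (t - u) powr a + 1) * c1 u * exp (L * u)) \<le> exp (L * t) / 2"
proof -
  define A D where "A = \<epsilon> powr r / r" and "D = (L * q) powr (-\<gamma>) / (q * \<epsilon> powr q)"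
  define H where "H = (\<lambda>u. 2 * A * \<bar>c1 u\<bar> powr r + D * ((t - u) powr (- (a * q + \<gamma>)) + (t - u) powr (-\<gamma>)))"
  define G where "G u = (1 / (t - u) powr a + 1) * c1 u * exp (- L * (t - u))" for u
  have "0 \<le> A" "0 \<le> D" using r_gt_1 q_gt_1 unfolding A_def D_def by auto
  note H = young_majorant_integral_le[OF \<open>0 \<le> t\<close> this c1(3,4) small[folded A_def D_def], folded H_def]
  have "AE u in lebesgue_on {0..t}. u \<in> {0..t} \<and> u \<noteq> t" by (rule AE_lebesgue_on_mem_neq) simp
  then have G_le_H: "AE u in lebesgue_on {0..t}. 0 \<le> G u \<and> G u \<le> H u"
    using c1(2)
  proof eventually_elim
    case (elim u)
    then have "0 < t - u" "0 \<le> c1 u" by auto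
    then show ?case
      using kernel_exp_le_young[OF \<open>0 < L\<close> \<open>0 < \<epsilon>\<close>, of "t - u" "c1 u"]
      unfolding G_def H_def A_def D_def by (auto simp: mult_ac)
  qed
  have "(\<lambda>u. 1 / (t - u) powr a + 1) \<in> borel_measurable (lebesgue_on {0..t})"
    "(\<lambda>u. exp (- L * (t - u))) \<in> borel_measurable (lebesgue_on {0..t})"
    by (intro borel_measurable_lebesgue_on_of_borel; measurable)+
  then have "G \<in> borel_measurable (lebesgue_on {0..t})"
    unfolding G_def using c1(1) by (intro borel_measurable_times)
  then have G: "integrable (lebesgue_on {0..t}) G"
    by (rule Bochner_Integration.integrable_bound[OF H(1)]) (use G_le_H in \<open>eventually_elim, auto\<close>)
  have "integral\<^sup>L (lebesgue_on {0..t}) G \<le> integral\<^sup>L (lebesgue_on {0..t}) H"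
    by (rule integral_mono_AE[OF G H(1)]) (use G_le_H in \<open>eventually_elim, auto\<close>)
  then have "integral\<^sup>L (lebesgue_on {0..t}) G \<le> 1/2" using H(2) by simp
  moreover have "(\<lambda>u. (1 / (t - u) powr a + 1) * c1 u * exp (L * u)) = (\<lambda>u. exp (L * t) * G u)"
    unfolding G_def by (auto simp: algebra_simps simp flip: exp_add)
  ultimately show "integrable (lebesgue_on {0..t}) (\<lambda>u. (1 / (t - u) powr a + 1) * c1 u * exp (L * u))"
    and "(LINT u|lebesgue_on {0..t}. (1 / (t - u) powr a + 1) * c1 u * exp (L * u)) \<le> exp (L * t) / 2"
    using G by simp_all
qed

text \<open>
  With \<open>P = Z\<^sup>r\<^sup>+\<^sup>1\<close> and \<open>\<epsilon>\<^sup>r = r / (8 (P + 1))\<close>, this is the \<open>L\<close> for which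
  \<open>(L q)\<^sup>-\<^sup>\<gamma> / (q \<epsilon>\<^sup>q) = \<gamma> / (8 Z)\<close>, so that both smallness conditions of
  \<open>weighted_kernel_integral_le\<close> hold as soon as \<open>1 + t \<le> Z\<close>.
\<close>

definition weight_rate :: "real \<Rightarrow> real" where
  "weight_rate Z = (8 * Z / (q * \<gamma>) * (8 * (Z powr (r + 1) + 1) / r) powr (q / r)) powr (1 / \<gamma>) / q"

lemma weight_rate_pos:
  assumes "1 \<le> Z"
  shows "0 < weight_rate Z"
proof -
  have "0 < Z powr (r + 1) + 1" by (simp add: add_nonneg_pos)
  then have "0 < 8 * (Z powr (r + 1) + 1) / r" using r_gt_1 by (intro divide_pos_pos mult_pos_pos) auto
  then have "0 < (8 * (Z powr (r + 1) + 1) / r) powr (q / r)" by (metis powr_gt_zero less_irrefl)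
  then have "0 < 8 * Z / (q * \<gamma>) * (8 * (Z powr (r + 1) + 1) / r) powr (q / r)"
    using assms q_gt_1 \<gamma>_pos by (intro mult_pos_pos divide_pos_pos) auto
  then have "0 < (8 * Z / (q * \<gamma>) * (8 * (Z powr (r + 1) + 1) / r) powr (q / r)) powr (1 / \<gamma>)"
    by (metis powr_gt_zero less_irrefl)
  then show ?thesis unfolding weight_rate_def using q_gt_1 by simp
qed

lemma weighted_kernel_integral_le_rate:
  fixes c1 :: "real \<Rightarrow> real"
  assumes "0 \<le> t" "1 + t \<le> Z"
    and c1: "c1 \<in> borel_measurable (lebesgue_on {0..t})" "AE u in lebesgue_on {0..t}. 0 \<le> c1 u"
      "integrable (lebesgue_on {0..t}) (\<lambda>u. \<bar>c1 u\<bar> powr r)"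
      "(LINT u|lebesgue_on {0..t}. \<bar>c1 u\<bar> powr r) \<le> Z powr (r + 1)"
  shows "integrable (lebesgue_on {0..t}) (\<lambda>u. (1 / (t - u) powr a + 1) * c1 u * exp (weight_rate Z * u))"
    and "(LINT u|lebesgue_on {0..t}. (1 / (t - u) powr a + 1) * c1 u * exp (weight_rate Z * u))
      \<le> exp (weight_rate Z * t) / 2"
proof -
  define P where "P = Z powr (r + 1)"
  define \<epsilon> where "\<epsilon> = (r / (8 * (P + 1))) powr (1 / r)"
  define W where "W = 8 * Z / (q * \<gamma>) * (8 * (P + 1) / r) powr (q / r)"
  have "1 \<le> Z" "0 \<le> P" using assms(1,2) unfolding P_def by auto
  have "0 < W" "0 < \<epsilon>" unfolding W_def \<epsilon>_def using \<open>1 \<le> Z\<close> \<open>0 \<le> P\<close> q_gt_1 \<gamma>_pos r_gt_1 by auto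
  have \<epsilon>_r: "\<epsilon> powr r = r / (8 * (P + 1))"
    unfolding \<epsilon>_def using r_gt_1 \<open>0 \<le> P\<close> by (simp add: powr_powr)
  have "\<epsilon> powr r / r * P = P / (8 * (P + 1))" unfolding \<epsilon>_r using r_gt_1 by simp
  also have "\<dots> \<le> 1/8" using \<open>0 \<le> P\<close> by (simp add: divide_le_eq)
  finally have small1: "\<epsilon> powr r / r * P \<le> 1/8" .
  have "(weight_rate Z * q) powr (-\<gamma>) = W powr (-1)"
    unfolding weight_rate_def P_def[symmetric] W_def[symmetric] using q_gt_1 \<gamma>_pos \<open>0 < W\<close>
    by (simp add: powr_powr)
  moreover have "W * \<epsilon> powr q = 8 * Z / (q * \<gamma>)"
  proof -
    have "(8 * (P + 1) / r) powr (q / r) * \<epsilon> powr q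
        = (8 * (P + 1) / r) powr (q / r) * (r / (8 * (P + 1))) powr (q / r)"
      unfolding \<epsilon>_def by (simp add: powr_powr)
    also have "\<dots> = (8 * (P + 1) / r * (r / (8 * (P + 1)))) powr (q / r)"
      using powr_mult[of "8 * (P + 1) / r" "r / (8 * (P + 1))" "q / r"] r_gt_1 \<open>0 \<le> P\<close> by simp
    also have "\<dots> = 1" using r_gt_1 \<open>0 \<le> P\<close> by simp
    finally show ?thesis unfolding W_def by (metis mult.assoc mult.right_neutral)
  qed
  ultimately have "(weight_rate Z * q) powr (-\<gamma>) / (q * \<epsilon> powr q) * (1 + t) / \<gamma> = (1 + t) / (8 * Z)"
    using \<open>0 < W\<close> q_gt_1 \<gamma>_pos by (simp add: powr_minus field_simps)
  also have "\<dots> \<le> 1/8" using assms(2) \<open>1 \<le> Z\<close> by (simp add: field_simps)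
  finally have small2: "(weight_rate Z * q) powr (-\<gamma>) / (q * \<epsilon> powr q) * (1 + t) / \<gamma> \<le> 1/8" .
  show "integrable (lebesgue_on {0..t}) (\<lambda>u. (1 / (t - u) powr a + 1) * c1 u * exp (weight_rate Z * u))"
    and "(LINT u|lebesgue_on {0..t}. (1 / (t - u) powr a + 1) * c1 u * exp (weight_rate Z * u))
      \<le> exp (weight_rate Z * t) / 2"
    using weighted_kernel_integral_le[OF weight_rate_pos[OF \<open>1 \<le> Z\<close>] \<open>0 < \<epsilon>\<close> \<open>0 \<le> t\<close> c1[folded P_def]
        small1 small2] by auto
qed

lemma weight_rate_le_powr: "\<exists>K e. 0 \<le> K \<and> (\<forall>Z \<ge> 1. weight_rate Z \<le> K * Z powr e)"
proof (intro exI conjI allI impI)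
  define K where "K = 8 / (q * \<gamma>) * (16 / r) powr (q / r)"
  define e where "e = (1 + (r + 1) * q / r) / \<gamma>"
  have "0 < K" unfolding K_def using q_gt_1 \<gamma>_pos r_gt_1 by simp
  show "0 \<le> K powr (1 / \<gamma>) / q" using q_gt_1 by simp
  fix Z :: real
  assume "1 \<le> Z"
  have "1 \<le> Z powr (r + 1)" using \<open>1 \<le> Z\<close> r_gt_1 by (simp add: ge_one_powr_ge_zero)
  then have "(8 * (Z powr (r + 1) + 1) / r) powr (q / r) \<le> (16 * Z powr (r + 1) / r) powr (q / r)"
    using r_gt_1 q_gt_1 by (intro powr_mono2 divide_right_mono) auto
  also have "\<dots> = (16 / r) powr (q / r) * Z powr ((r + 1) * q / r)"
    using r_gt_1 \<open>1 \<le> Z\<close> by (simp add: powr_mult powr_divide powr_powr)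
  finally have "8 * Z / (q * \<gamma>) * (8 * (Z powr (r + 1) + 1) / r) powr (q / r)
      \<le> 8 * Z / (q * \<gamma>) * ((16 / r) powr (q / r) * Z powr ((r + 1) * q / r))"
    using \<open>1 \<le> Z\<close> q_gt_1 \<gamma>_pos by (intro mult_left_mono) auto
  also have "\<dots> = K * Z powr (1 + (r + 1) * q / r)"
    unfolding K_def using \<open>1 \<le> Z\<close> by (simp add: powr_add)
  finally have "weight_rate Z \<le> (K * Z powr (1 + (r + 1) * q / r)) powr (1 / \<gamma>) / q"
    unfolding weight_rate_def using q_gt_1 \<gamma>_pos r_gt_1 \<open>1 \<le> Z\<close>
    by (intro divide_right_mono powr_mono2) auto
  also have "\<dots> = K powr (1 / \<gamma>) / q * Z powr e"
    unfolding e_def using \<open>0 < K\<close> \<open>1 \<le> Z\<close> by (simp add: powr_mult powr_powr)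
  finally show "weight_rate Z \<le> K powr (1 / \<gamma>) / q * Z powr e" .
qed

lemma exp_weight_rate_le: "\<exists>C k. 0 \<le> C \<and> (\<forall>Z \<ge> 1. 1 + exp (weight_rate Z * Z) \<le> exp (C * Z ^ k))"
proof -
  obtain K e where "0 \<le> K" and K: "\<And>Z. 1 \<le> Z \<Longrightarrow> weight_rate Z \<le> K * Z powr e"
    using weight_rate_le_powr by blast
  define k where "k = nat \<lceil>e + 1\<rceil>"
  have "1 + exp (weight_rate Z * Z) \<le> exp ((1 + K) * Z ^ k)" if "1 \<le> Z" for Z
  proof -
    have "weight_rate Z * Z \<le> K * Z powr e * Z"
      using K[OF that] that by (intro mult_right_mono) auto
    also have "\<dots> = K * Z powr (e + 1)" using that by (simp add: powr_add)
    also have "\<dots> \<le> K * Z powr real k"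
      using that \<open>0 \<le> K\<close> real_nat_ceiling_ge[of "e + 1"] unfolding k_def
      by (intro mult_left_mono powr_mono) auto
    also have "\<dots> = K * Z ^ k" using that by (simp add: powr_realpow)
    finally have "1 + weight_rate Z * Z \<le> (1 + K) * Z ^ k"
      using one_le_power[OF that, of k] by (simp add: algebra_simps)
    have "1 + exp (weight_rate Z * Z) \<le> exp (1 + weight_rate Z * Z)"
      using weight_rate_pos[OF that] that by (intro one_plus_exp_le_exp_one_plus) simp
    also have "\<dots> \<le> exp ((1 + K) * Z ^ k)" using \<open>1 + weight_rate Z * Z \<le> (1 + K) * Z ^ k\<close> by simp
    finally show ?thesis .
  qed
  moreover have "0 \<le> 1 + K" using \<open>0 \<le> K\<close> by simp
  ultimately show ?thesis by blast
qed

lemma singular_gronwall_pointwise: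
  fixes \<phi> c0 c1 :: "real \<Rightarrow> real"
  assumes t0: "t0 \<in> {0..T}" "1 + t0 \<le> Z"
    and c1: "c1 \<in> borel_measurable (lebesgue_on {0..t0})" "AE u in lebesgue_on {0..T}. 0 \<le> c1 u"
      "integrable (lebesgue_on {0..t0}) (\<lambda>u. \<bar>c1 u\<bar> powr r)"
      "(LINT u|lebesgue_on {0..t0}. \<bar>c1 u\<bar> powr r) \<le> Z powr (r + 1)"
    and \<phi>: "AE s in lebesgue_on {0..T}. \<bar>\<phi> s\<bar> \<le> \<Phi>" "AE s in lebesgue_on {0..T}. 0 \<le> \<phi> s"
    and c0: "\<forall>t\<in>{0..T}. 0 \<le> c0 t" "mono_on {0..T} c0"
    and ineq: "AE t in lebesgue_on {0..T}.
        \<phi> t \<le> c0 t + (LINT s|lebesgue_on {0..t}. (1 / (t - s) powr a + 1) * c1 s * \<phi> s)"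
      "\<phi> t0 \<le> c0 t0 + (LINT s|lebesgue_on {0..t0}. (1 / (t0 - s) powr a + 1) * c1 s * \<phi> s)"
  shows "\<phi> t0 \<le> c0 t0 * (1 + exp (weight_rate Z * t0))"
proof -
  have sub: "{0..t0} \<subseteq> {0..T}" using t0 by auto
  have weighted: "integrable (lebesgue_on {0..t}) (\<lambda>u. (1 / (t - u) powr a + 1) * c1 u * exp (weight_rate Z * u))
    \<and> (LINT u|lebesgue_on {0..t}. (1 / (t - u) powr a + 1) * c1 u * exp (weight_rate Z * u))
      \<le> exp (weight_rate Z * t) / 2" if "t \<in> {0..t0}" for t
  proof -
    have "{0..t} \<subseteq> {0..t0}" using that by auto
    have "(LINT u|lebesgue_on {0..t}. \<bar>c1 u\<bar> powr r) \<le> (LINT u|lebesgue_on {0..t0}. \<bar>c1 u\<bar> powr r)"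
      using c1(3) \<open>{0..t} \<subseteq> {0..t0}\<close> by (intro integral_mono_lebesgue_on_AE) auto
    then show ?thesis
      using weighted_kernel_integral_le_rate[of t Z c1] that t0 c1
        measurable_restrict_mono[OF c1(1) \<open>{0..t} \<subseteq> {0..t0}\<close>]
        AE_lebesgue_on_subset[OF c1(2), of "{0..t}"] integrable_subinterval[OF c1(3), of 0 t]
      by auto
  qed
  have kernel_nonneg: "AE u in lebesgue_on {0..t}. 0 \<le> (1 / (t - u) powr a + 1) * c1 u"
    if "t \<in> {0..t0}" for t
    using AE_lebesgue_on_subset[OF c1(2), of "{0..t}"] that t0 by (auto elim: AE_mp)
  show ?thesis
  proof (rule gronwall_exponential_weight[where K = "\<lambda>t s. (1 / (t - s) powr a + 1) * c1 s"])
    show "AE s in lebesgue_on {0..t0}. \<bar>\<phi> s\<bar> \<le> \<Phi>" "AE s in lebesgue_on {0..t0}. 0 \<le> \<phi> s"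
      "AE t in lebesgue_on {0..t0}.
        \<phi> t \<le> c0 t + (LINT s|lebesgue_on {0..t}. (1 / (t - s) powr a + 1) * c1 s * \<phi> s)"
      using \<phi> ineq(1) sub by (auto intro: AE_lebesgue_on_subset)
  qed (use weighted kernel_nonneg weight_rate_pos t0 c0 ineq(2) in \<open>auto simp: mult.assoc intro: mono_onD\<close>)
qed

end

section \<open>\<open>L\<^sup>p\<close> norms and the exponents of the theorem\<close>

lemma in_Lp_subinterval:
  assumes "in_Lp p {a..b} f" "{c..d} \<subseteq> {a..b}"
  shows "in_Lp p {c..d} f"
proof -
  have measurable: "f \<in> borel_measurable (lebesgue_on {c..d})"
    using assms measurable_restrict_mono unfolding in_Lp_def by blast
  show ?thesis
  proof (cases "p = \<infinity>")
    case True
    then obtain C where "AE s in lebesgue_on {a..b}. \<bar>f s\<bar> \<le> C" using assms(1) unfolding in_Lp_def by auto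
    then have "AE s in lebesgue_on {c..d}. \<bar>f s\<bar> \<le> C" by (rule AE_lebesgue_on_subset) (use assms(2) in auto)
    then show ?thesis using measurable True unfolding in_Lp_def by auto
  next
    case False
    then show ?thesis
      using measurable assms integrable_subinterval[of a b _ c d] unfolding in_Lp_def by auto
  qed
qed

lemma Lp_norm_on_infinity:
  assumes "AE s in lebesgue_on A. \<bar>f s\<bar> \<le> C"
  shows "0 \<le> Lp_norm_on \<infinity> A f" and "AE s in lebesgue_on A. \<bar>f s\<bar> \<le> Lp_norm_on \<infinity> A f"
proof -
  define S where "S = {C. 0 \<le> C \<and> (AE s in lebesgue_on A. \<bar>f s\<bar> \<le> C)}"
  have N: "Lp_norm_on \<infinity> A f = Inf S" unfolding Lp_norm_on_def S_def by simp
  have "AE s in lebesgue_on A. \<bar>f s\<bar> \<le> max C 0" using assms by eventually_elim auto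
  then have "max C 0 \<in> S" unfolding S_def by auto
  then have "S \<noteq> {}" by auto
  then show "0 \<le> Lp_norm_on \<infinity> A f" unfolding N by (intro cInf_greatest) (auto simp: S_def)
  have "AE s in lebesgue_on A. \<bar>f s\<bar> \<le> Inf S + 1 / Suc n" for n
  proof -
    have "Inf S < Inf S + 1 / Suc n" by simp
    then obtain D where "D \<in> S" "D < Inf S + 1 / Suc n" using cInf_lessD[OF \<open>S \<noteq> {}\<close>] by blast
    then have "AE s in lebesgue_on A. \<bar>f s\<bar> \<le> D" unfolding S_def by simp
    then show ?thesis by eventually_elim (use \<open>D < Inf S + 1 / Suc n\<close> in simp)
  qed
  moreover have "(\<lambda>n. Inf S + 1 / Suc n) \<longlonglongrightarrow> Inf S"
    using tendsto_add[OF tendsto_const LIMSEQ_inverse_real_of_nat, of "Inf S"] by (simp add: inverse_eq_divide)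
  ultimately have "AE s in lebesgue_on A. \<bar>f s\<bar> \<le> Inf S"
    by (rule AE_le_of_tendsto)
  then show "AE s in lebesgue_on A. \<bar>f s\<bar> \<le> Lp_norm_on \<infinity> A f" unfolding N .
qed

lemma power_integral_Lp_norm_on:
  assumes "in_Lp p A f" "p \<noteq> \<infinity>" "0 < real_of_ereal p"
  shows "0 \<le> Lp_norm_on p A f"
    and "(LINT u|lebesgue_on A. \<bar>f u\<bar> powr real_of_ereal p) = Lp_norm_on p A f powr real_of_ereal p"
proof -
  define P where "P = (LINT u|lebesgue_on A. \<bar>f u\<bar> powr real_of_ereal p)"
  have "0 \<le> P" unfolding P_def by (intro integral_nonneg_AE) auto
  have N: "Lp_norm_on p A f = P powr (1 / real_of_ereal p)" unfolding Lp_norm_on_def P_def using assms by simp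
  show "0 \<le> Lp_norm_on p A f" unfolding N by simp
  show "(LINT u|lebesgue_on A. \<bar>f u\<bar> powr real_of_ereal p) = Lp_norm_on p A f powr real_of_ereal p"
    unfolding N P_def[symmetric] using \<open>0 \<le> P\<close> assms(3) by (simp add: powr_powr)
qed

lemma power_integral_le_Lp_norm_on_infinity:
  assumes "in_Lp \<infinity> {0..t} f" "0 \<le> t" "0 \<le> r"
  shows "integrable (lebesgue_on {0..t}) (\<lambda>u. \<bar>f u\<bar> powr r)"
    and "(LINT u|lebesgue_on {0..t}. \<bar>f u\<bar> powr r) \<le> t * Lp_norm_on \<infinity> {0..t} f powr r"
proof -
  define N where "N = Lp_norm_on \<infinity> {0..t} f"
  obtain C where "AE s in lebesgue_on {0..t}. \<bar>f s\<bar> \<le> C" using assms(1) unfolding in_Lp_def by auto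
  note N = Lp_norm_on_infinity[OF this, folded N_def]
  have bound: "AE u in lebesgue_on {0..t}. \<bar>f u\<bar> powr r \<le> N powr r"
    using N(2) by eventually_elim (use assms(3) in \<open>auto intro: powr_mono2\<close>)
  have "((\<lambda>u. N powr r) has_integral t * N powr r) {0..t}"
    using has_integral_const_real[of "N powr r" 0 t] assms(2) by simp
  then have const: "integrable (lebesgue_on {0..t}) (\<lambda>u. N powr r)"
    "(LINT u|lebesgue_on {0..t}. N powr r) = t * N powr r"
    by (rule lebesgue_on_has_integral_nonneg; simp)+
  have "f \<in> borel_measurable (lebesgue_on {0..t})" using assms(1) unfolding in_Lp_def by simp
  then have "(\<lambda>u. \<bar>f u\<bar> powr r) \<in> borel_measurable (lebesgue_on {0..t})" by measurable
  then show integrable: "integrable (lebesgue_on {0..t}) (\<lambda>u. \<bar>f u\<bar> powr r)"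
    by (rule Bochner_Integration.integrable_bound[OF const(1)]) (use bound in \<open>eventually_elim, auto\<close>)
  have "(LINT u|lebesgue_on {0..t}. \<bar>f u\<bar> powr r) \<le> (LINT u|lebesgue_on {0..t}. N powr r)"
    by (rule integral_mono_AE[OF integrable const(1) bound])
  then show "(LINT u|lebesgue_on {0..t}. \<bar>f u\<bar> powr r) \<le> t * N powr r" using const(2) by linarith
qed

text \<open>
  For \<open>p = \<infinity>\<close> any finite \<open>r > 4\<close> would do, since \<open>c\<^sub>1\<close> is then bounded on the bounded
  interval \<open>[0, t]\<close>.
\<close>

definition integrability_exponent :: "ereal \<Rightarrow> real" where
  "integrability_exponent p = (if p = \<infinity> then 5 else real_of_ereal p)"

lemma integrability_exponent_gt_4: "4 < p \<Longrightarrow> 4 < integrability_exponent p"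
  by (cases p) (auto simp: integrability_exponent_def)

lemma singular_gronwall_exponents_of_Lp:
  assumes "4 < p"
  shows "singular_gronwall_exponents (integrability_exponent p) (exp_inv p + 1/2)"
proof
  have r: "4 < integrability_exponent p" using integrability_exponent_gt_4[OF assms] .
  then show "1 < integrability_exponent p" by simp
  show "0 \<le> exp_inv p + 1/2" using r by (auto simp: exp_inv_def integrability_exponent_def split: if_splits)
  show "exp_inv p + 1/2 < 1 - 1 / integrability_exponent p"
    using r by (auto simp: exp_inv_def integrability_exponent_def field_simps split: if_splits)
qed

lemma power_integral_le_Lp_norm_on:
  assumes "4 < p" "in_Lp p {0..t} f" "0 \<le> t"
  defines "r \<equiv> integrability_exponent p" and "N \<equiv> Lp_norm_on p {0..t} f"
  shows "0 \<le> N"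
    and "integrable (lebesgue_on {0..t}) (\<lambda>u. \<bar>f u\<bar> powr r)"
    and "(LINT u|lebesgue_on {0..t}. \<bar>f u\<bar> powr r) \<le> (1 + N + t) powr (r + 1)"
proof -
  have "4 < r" unfolding r_def using integrability_exponent_gt_4[OF assms(1)] .
  have "0 \<le> N \<and> integrable (lebesgue_on {0..t}) (\<lambda>u. \<bar>f u\<bar> powr r)
      \<and> (LINT u|lebesgue_on {0..t}. \<bar>f u\<bar> powr r) \<le> (1 + N) powr r * (1 + t)"
  proof (cases "p = \<infinity>")
    case True
    have "0 \<le> N" unfolding N_def True
      using assms(2) True Lp_norm_on_infinity(1) unfolding in_Lp_def by auto
    then have "t * N powr r \<le> (1 + t) * (1 + N) powr r" using assms(3) \<open>4 < r\<close>
      by (intro mult_mono powr_mono2) auto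
    then show ?thesis
      using power_integral_le_Lp_norm_on_infinity[of t f r] assms(2,3) \<open>0 \<le> N\<close> \<open>4 < r\<close> True
      unfolding N_def by (auto simp: mult.commute)
  next
    case False
    then have rp: "r = real_of_ereal p" unfolding r_def integrability_exponent_def by simp
    note N = power_integral_Lp_norm_on[OF assms(2) False, folded rp N_def]
    have "N powr r \<le> (1 + N) powr r * 1" using N(1) \<open>4 < r\<close> by (simp add: powr_mono2)
    also have "\<dots> \<le> (1 + N) powr r * (1 + t)" using assms(3) by (intro mult_left_mono) auto
    finally show ?thesis
      using N \<open>4 < r\<close> assms(2) False unfolding in_Lp_def rp by auto
  qed
  moreover have "(1 + N) powr r * (1 + t) \<le> (1 + N + t) powr r * (1 + N + t) powr 1"
    using calculation assms(3) \<open>4 < r\<close> by (intro mult_mono powr_mono2) auto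
  ultimately show "0 \<le> N" "integrable (lebesgue_on {0..t}) (\<lambda>u. \<bar>f u\<bar> powr r)"
    "(LINT u|lebesgue_on {0..t}. \<bar>f u\<bar> powr r) \<le> (1 + N + t) powr (r + 1)"
    using assms(3) by (auto simp: powr_add)
qed

definition singular_gronwall_hyps ::
    "ereal \<Rightarrow> real \<Rightarrow> (real \<Rightarrow> real) \<Rightarrow> (real \<Rightarrow> real) \<Rightarrow> (real \<Rightarrow> real) \<Rightarrow> bool" where
  "singular_gronwall_hyps p T \<phi> c0 c1 \<longleftrightarrow>
     in_Lp \<infinity> {0..T} \<phi> \<and> (AE t in lebesgue_on {0..T}. 0 \<le> \<phi> t) \<and>
     in_Lp p {0..T} c1 \<and> (AE t in lebesgue_on {0..T}. 0 \<le> c1 t) \<and>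
     (\<forall>t\<in>{0..T}. 0 \<le> c0 t) \<and> mono_on {0..T} c0 \<and>
     (AE t in lebesgue_on {0..T}. \<phi> t \<le> c0 t + (LINT s|lebesgue_on {0..t}.
        (1 / (t - s) powr (exp_inv p + 1/2) + 1) * c1 s * \<phi> s))"

lemma singular_gronwall_bound:
  fixes p :: ereal
  assumes "4 < p"
  obtains C :: real and k :: nat where "0 \<le> C"
    and "\<And>T \<phi> c0 c1. singular_gronwall_hyps p T \<phi> c0 c1 \<Longrightarrow>
      AE t in lebesgue_on {0..T}. \<phi> t \<le> c0 t * exp (C * (1 + Lp_norm_on p {0..t} c1 + t) ^ k)"
proof -
  define r where "r = integrability_exponent p"
  interpret singular_gronwall_exponents r "exp_inv p + 1/2"
    unfolding r_def by (rule singular_gronwall_exponents_of_Lp[OF assms])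
  obtain C k where "0 \<le> C" and growth: "\<And>Z. 1 \<le> Z \<Longrightarrow> 1 + exp (weight_rate Z * Z) \<le> exp (C * Z ^ k)"
    using exp_weight_rate_le by blast
  show ?thesis
  proof (rule that[OF \<open>0 \<le> C\<close>])
    fix T and \<phi> c0 c1 :: "real \<Rightarrow> real"
    assume "singular_gronwall_hyps p T \<phi> c0 c1"
    then have \<phi>: "in_Lp \<infinity> {0..T} \<phi>" "AE t in lebesgue_on {0..T}. 0 \<le> \<phi> t"
      and c1: "in_Lp p {0..T} c1" "AE t in lebesgue_on {0..T}. 0 \<le> c1 t"
      and c0: "\<forall>t\<in>{0..T}. 0 \<le> c0 t" "mono_on {0..T} c0"
      and ineq: "AE t in lebesgue_on {0..T}. \<phi> t \<le> c0 t + (LINT s|lebesgue_on {0..t}.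
          (1 / (t - s) powr (exp_inv p + 1/2) + 1) * c1 s * \<phi> s)"
      unfolding singular_gronwall_hyps_def by auto
    obtain \<Phi> where \<Phi>: "AE s in lebesgue_on {0..T}. \<bar>\<phi> s\<bar> \<le> \<Phi>" using \<phi>(1) unfolding in_Lp_def by auto
    have pointwise: "\<phi> t \<le> c0 t * exp (C * (1 + Lp_norm_on p {0..t} c1 + t) ^ k)"
      if t: "t \<in> {0..T}" and ineq_t: "\<phi> t \<le> c0 t + (LINT s|lebesgue_on {0..t}.
          (1 / (t - s) powr (exp_inv p + 1/2) + 1) * c1 s * \<phi> s)" for t
    proof -
      define Z where "Z = 1 + Lp_norm_on p {0..t} c1 + t"
      have c1_t: "in_Lp p {0..t} c1" using in_Lp_subinterval[OF c1(1)] t by auto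
      have "0 \<le> t" using t by simp
      note c1_power = power_integral_le_Lp_norm_on[OF assms c1_t this, folded r_def Z_def]
      have "1 + t \<le> Z" "t \<le> Z" "1 \<le> Z" using c1_power(1) t unfolding Z_def by auto
      have "\<phi> t \<le> c0 t * (1 + exp (weight_rate Z * t))"
        by (rule singular_gronwall_pointwise[OF t \<open>1 + t \<le> Z\<close> _ c1(2) c1_power(2,3) \<Phi> \<phi>(2) c0 ineq ineq_t])
          (use c1_t in \<open>simp add: in_Lp_def\<close>)
      also have "\<dots> \<le> c0 t * exp (C * Z ^ k)"
      proof (intro mult_left_mono)
        have "weight_rate Z * t \<le> weight_rate Z * Z"
          using weight_rate_pos[OF \<open>1 \<le> Z\<close>] \<open>t \<le> Z\<close> by (intro mult_left_mono) auto
        then have "exp (weight_rate Z * t) \<le> exp (weight_rate Z * Z)" by simp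
        then show "1 + exp (weight_rate Z * t) \<le> exp (C * Z ^ k)" using growth[OF \<open>1 \<le> Z\<close>] by linarith
      qed (use c0(1) t in auto)
      finally show ?thesis unfolding Z_def .
    qed
    have "AE t in lebesgue_on {0..T}. t \<in> {0..T} \<and> t \<noteq> 0" by (rule AE_lebesgue_on_mem_neq) simp
    then show "AE t in lebesgue_on {0..T}. \<phi> t \<le> c0 t * exp (C * (1 + Lp_norm_on p {0..t} c1 + t) ^ k)"
      using ineq by eventually_elim (use pointwise in blast)
  qed
qed

theorem proposition3p3:
  fixes p :: ereal
  assumes "4 < p"
  shows "\<exists>M :: real \<Rightarrow> real \<Rightarrow> real.
    (\<forall>x y. 0 \<le> x \<longrightarrow> 0 \<le> y \<longrightarrow> 1 \<le> M x y) \<and>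
    (\<forall>x y x' y'. 0 \<le> x \<longrightarrow> x \<le> x' \<longrightarrow> 0 \<le> y \<longrightarrow> y \<le> y' \<longrightarrow> M x y \<le> M x' y') \<and>
    continuous_on ({0..} \<times> {0..}) (\<lambda>(x, y). M x y) \<and>
    (\<exists>C k. \<forall>x y. 0 \<le> x \<longrightarrow> 0 \<le> y \<longrightarrow> M x y \<le> exp (C * (1 + x + y) ^ k)) \<and>
    (\<forall>(T :: real) (\<phi> :: real \<Rightarrow> real) (c0 :: real \<Rightarrow> real) (c1 :: real \<Rightarrow> real).
       0 < T \<longrightarrow>
       in_Lp \<infinity> {0..T} \<phi> \<longrightarrow> (AE t in lebesgue_on {0..T}. 0 \<le> \<phi> t) \<longrightarrow>
       in_Lp p {0..T} c1 \<longrightarrow> (AE t in lebesgue_on {0..T}. 0 \<le> c1 t) \<longrightarrow>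
       in_Lp \<infinity> {0..T} c0 \<longrightarrow> (\<forall>t\<in>{0..T}. 0 \<le> c0 t) \<longrightarrow> mono_on {0..T} c0 \<longrightarrow>
       (AE t in lebesgue_on {0..T}.
          \<phi> t \<le> c0 t + (LINT s | lebesgue_on {0..t}.
                  (1 / (t - s) powr (exp_inv p + 1/2) + 1) * c1 s * \<phi> s)) \<longrightarrow>
       (AE t in lebesgue_on {0..T}. \<phi> t \<le> c0 t * M (Lp_norm_on p {0..t} c1) t))"
proof -
  obtain C :: real and k :: nat where "0 \<le> C" and bound: "\<And>T \<phi> c0 c1.
      singular_gronwall_hyps p T \<phi> c0 c1 \<Longrightarrow>
      AE t in lebesgue_on {0..T}. \<phi> t \<le> c0 t * exp (C * (1 + Lp_norm_on p {0..t} c1 + t) ^ k)"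
    using singular_gronwall_bound[OF assms] by blast
  define M where "M x y = exp (C * (1 + x + y) ^ k)" for x y :: real
  have "continuous_on ({0..} \<times> {0..}) (\<lambda>(x, y). M x y)"
    unfolding M_def case_prod_beta by (intro continuous_intros)
  moreover have "M x y \<le> M x' y'" if "0 \<le> x" "x \<le> x'" "0 \<le> y" "y \<le> y'" for x y x' y'
    unfolding M_def using that \<open>0 \<le> C\<close> by (auto intro!: mult_left_mono power_mono)
  moreover have "1 \<le> M x y" if "0 \<le> x" "0 \<le> y" for x y
    unfolding M_def using that \<open>0 \<le> C\<close> by simp
  ultimately show ?thesis
    using bound unfolding singular_gronwall_hyps_def by (intro exI[of _ M] conjI) (auto simp: M_def)
qed

end
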